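(* Let $(\Omega,\mathcal{A},\mu)$ be a measure space and $F:\mathbb{R}^m\rightrightarrows\mathbb{R}^n$ a set-valued map. Let $(x_k)$, $(y_k)$ be sequences of measurable functions such that $x_k\to x$ $\mu$-almost everywhere for some function $x:\Omega\to\mathbb{R}^m$, $y_k\rightharpoonup y$ weakly in $L^1(\mu;\mathbb{R}^n)$, and $y_k(t)\in F(x_k(t))$ for $\mu$-almost all $t\in\Omega$. Then $y(t)\in(\operatorname{conv}^\infty F)(x(t))$ for $\mu$-almost all $t\in\Omega$.
   Context: For sets $A_k\subset\mathbb{R}^n$, the outer limit is $\limsup_{k\to\infty}A_k:=\{y:\ \exists$ a subsequence $k_j$ and $y_{k_j}\in A_{k_j}$ with $y_{k_j}\to y\}$. For $U\subset\mathbb{R}^m$, $F(U):=\bigcup_{x'\in U}F(x')$; $\operatorname{conv}$ denotes convex hull; $B_r(0)$ is the open ball of radius $r$. Define $(\operatorname{conv}^\infty F)(x):=\limsup_{k\to\infty}\operatorname{conv}\big(F(x+B_{1/k}(0))\big)$. *)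

theory Defs
  imports "HOL-Analysis.Analysis"
begin

definition outer_limit :: "(nat \<Rightarrow> 'a::topological_space set) \<Rightarrow> 'a set" where
  "outer_limit A = {y. \<exists>r z. strict_mono r \<and> (\<forall>j. z j \<in> A (r j)) \<and> z \<longlonglongrightarrow> y}"

text \<open>(conv^infty F)(x) = limsup_k conv(F(x + B_{1/k}(0))), k = 1,2,...
  (indexed by Suc k to avoid k = 0; the outer limit is shift invariant).\<close>
definition conv_inf :: "('m::euclidean_space \<Rightarrow> 'n::euclidean_space set) \<Rightarrow> 'm \<Rightarrow> 'n set" where
  "conv_inf F x = outer_limit (\<lambda>k. convex hull (\<Union> (F ` ball x (1 / real (Suc k)))))"

definition L1_dual :: "'a measure \<Rightarrow> (('a \<Rightarrow> 'b::euclidean_space) \<Rightarrow> real) set" where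
  "L1_dual M = {\<phi>.
     (\<forall>f g. integrable M f \<longrightarrow> integrable M g \<longrightarrow> \<phi> (\<lambda>t. f t + g t) = \<phi> f + \<phi> g) \<and>
     (\<forall>c f. integrable M f \<longrightarrow> \<phi> (\<lambda>t. c *\<^sub>R f t) = c * \<phi> f) \<and>
     (\<exists>C. \<forall>f. integrable M f \<longrightarrow> \<bar>\<phi> f\<bar> \<le> C * (\<integral>t. norm (f t) \<partial>M))}"

definition weak_L1_conv :: "'a measure \<Rightarrow> (nat \<Rightarrow> 'a \<Rightarrow> 'b::euclidean_space) \<Rightarrow> ('a \<Rightarrow> 'b) \<Rightarrow> bool" where
  "weak_L1_conv M ys y \<longleftrightarrow> (\<forall>k. integrable M (ys k)) \<and> integrable M y \<and>
     (\<forall>\<phi>\<in>L1_dual M. (\<lambda>k. \<phi> (ys k)) \<longlonglongrightarrow> \<phi> y)"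

end

theory Submission imports Defs begin

text \<open>Fix a tail index N. For almost every t, y t lies in the closed convex hull K t of
  the values ys k t with k \<ge> N. Otherwise, let p t be the projection of y t onto K t and
  v t = y t - p t; then inner (v t) (ys k t) + |v t|^2 \<le> inner (v t) (y t) for all k, and
  integrating against the bounded weight v / (1 + |v|) yields a gap, the integral of
  |v|^2 / (1 + |v|), that weak convergence forces to vanish. The technical point is the
  measurability of p: K t is also the closure of the countably many rational convex
  combinations of the ys k t, so p is a pointwise limit of measurable near-minimisers.
  Finally, since xs k t converges to x t, the tails of ys k t lie in F applied to shrinking
  balls around x t, so y t lies in the closure of the convex hull of every F (ball (x t) r).\<close>

text \<open>Terms for iterated convex combinations with rational weights; the weight is clamped into
  [0, 1] so that every term denotes a convex combination. The rational weights make the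
  index type countable, which the measurable selection below relies on.\<close>

datatype rat_mix = Point nat | Mix rat rat_mix rat_mix

instance rat_mix :: countable by countable_datatype

definition clamp01 :: "real \<Rightarrow> real" where
  "clamp01 u = max 0 (min 1 u)"

primrec mix_eval :: "rat_mix \<Rightarrow> (nat \<Rightarrow> 'n::real_vector) \<Rightarrow> 'n" where
  "mix_eval (Point i) f = f i"
| "mix_eval (Mix u a b) f =
     clamp01 (of_rat u) *\<^sub>R mix_eval a f + (1 - clamp01 (of_rat u)) *\<^sub>R mix_eval b f"

definition rat_hull :: "(nat \<Rightarrow> 'n::real_vector) \<Rightarrow> 'n set" where
  "rat_hull f = range (\<lambda>e. mix_eval e f)"

lemma rat_hull_mem: "f i \<in> rat_hull f"
  unfolding rat_hull_def by (metis mix_eval.simps(1) rangeI)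

lemma rat_hull_subset_convex_hull: "rat_hull f \<subseteq> convex hull (range f)"
proof -
  have "mix_eval e f \<in> convex hull (range f)" for e
    by (induction e)
       (auto simp: clamp01_def intro: hull_inc convexD[OF convex_convex_hull])
  then show ?thesis unfolding rat_hull_def by blast
qed

lemma rat_hull_clamp01_combination:
  assumes "r \<in> \<rat>" "a \<in> rat_hull f" "b \<in> rat_hull f"
  shows "clamp01 r *\<^sub>R a + (1 - clamp01 r) *\<^sub>R b \<in> rat_hull f"
proof -
  obtain u where "r = of_rat u" using assms(1) by (auto elim: Rats_cases)
  moreover obtain ea eb where "a = mix_eval ea f" "b = mix_eval eb f"
    using assms(2,3) by (auto simp: rat_hull_def)
  ultimately have "mix_eval (Mix u ea eb) f = clamp01 r *\<^sub>R a + (1 - clamp01 r) *\<^sub>R b" by simp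
  then show ?thesis unfolding rat_hull_def by (metis rangeI)
qed

lemma convex_closure_rat_hull:
  fixes f :: "nat \<Rightarrow> 'n::euclidean_space"
  shows "convex (closure (rat_hull f))"
proof -
  let ?K = "rat_hull f"
  let ?h = "\<lambda>(r, a, b). clamp01 r *\<^sub>R a + (1 - clamp01 r) *\<^sub>R (b::'n)"
  have "continuous_on UNIV ?h"
    unfolding clamp01_def case_prod_unfold by (intro continuous_intros)
  moreover have "?h ` (\<rat> \<times> ?K \<times> ?K) \<subseteq> closure ?K"
    using rat_hull_clamp01_combination closure_subset by fastforce
  ultimately have "?h ` closure (\<rat> \<times> ?K \<times> ?K) \<subseteq> closure ?K"
    by (intro image_closure_subset) (auto intro: continuous_on_subset)
  then have h: "?h ` (UNIV \<times> closure ?K \<times> closure ?K) \<subseteq> closure ?K"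
    by (simp add: closure_Times Rats_closure_real)
  then show ?thesis
  proof (intro convexI)
    fix a b and u v :: real
    assume "a \<in> closure ?K" "b \<in> closure ?K" "0 \<le> u" "0 \<le> v" "u + v = 1"
    moreover have "clamp01 u = u" "1 - u = v"
      using \<open>0 \<le> u\<close> \<open>0 \<le> v\<close> \<open>u + v = 1\<close> by (auto simp: clamp01_def)
    moreover have "?h (u, a, b) \<in> closure ?K"
      using h \<open>a \<in> closure ?K\<close> \<open>b \<in> closure ?K\<close> by blast
    ultimately show "u *\<^sub>R a + v *\<^sub>R b \<in> closure ?K"
      by simp
  qed
qed

lemma borel_measurable_mix_eval [measurable]:
  fixes g :: "nat \<Rightarrow> 'a \<Rightarrow> 'n::euclidean_space"
  assumes [measurable]: "\<And>k. g k \<in> borel_measurable M"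
  shows "(\<lambda>t. mix_eval e (\<lambda>k. g k t)) \<in> borel_measurable M"
  by (induction e) (simp_all add: clamp01_def)

lemma dist_closest_point_sq_le:
  fixes C :: "'n::euclidean_space set"
  assumes "closed C" "convex C" "c \<in> C"
  shows "(dist c (closest_point C a))\<^sup>2 \<le> (dist a c)\<^sup>2 - (dist a (closest_point C a))\<^sup>2"
proof -
  let ?p = "closest_point C a"
  have "inner (a - ?p) (c - ?p) \<le> 0"
    by (rule closest_point_dot[OF assms(2,1,3)])
  moreover have "inner (a - ?p) (c - ?p)
      = ((norm (a - ?p))\<^sup>2 + (norm (c - ?p))\<^sup>2 - (norm (a - c))\<^sup>2) / 2"
    using dot_norm_neg[of "a - ?p" "c - ?p"] by simp
  ultimately show ?thesis
    by (simp add: dist_norm norm_minus_commute[of c])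
qed

lemma inner_closest_point_gap:
  fixes C :: "'n::euclidean_space set"
  assumes "closed C" "convex C" "c \<in> C"
  shows "inner (a - closest_point C a) c + (dist a (closest_point C a))\<^sup>2
           \<le> inner (a - closest_point C a) a"
  using closest_point_dot[OF assms(2,1,3), of a]
  by (simp add: dist_norm power2_norm_eq_inner inner_diff_right)

lemma tendsto_closest_point:
  fixes C :: "'n::euclidean_space set"
  assumes "closed C" "convex C" "\<And>m. q m \<in> C"
    and "(\<lambda>m. dist a (q m)) \<longlonglongrightarrow> dist a (closest_point C a)"
  shows "q \<longlonglongrightarrow> closest_point C a"
proof -
  let ?p = "closest_point C a"
  have bound: "dist (q m) ?p \<le> sqrt ((dist a (q m))\<^sup>2 - (dist a ?p)\<^sup>2)" for m
    by (rule real_le_rsqrt) (rule dist_closest_point_sq_le[OF assms(1-3)])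
  have "(\<lambda>m. sqrt ((dist a (q m))\<^sup>2 - (dist a ?p)\<^sup>2))
      \<longlonglongrightarrow> sqrt ((dist a ?p)\<^sup>2 - (dist a ?p)\<^sup>2)"
    by (intro tendsto_real_sqrt tendsto_diff tendsto_power assms(4) tendsto_const)
  then have "(\<lambda>m. sqrt ((dist a (q m))\<^sup>2 - (dist a ?p)\<^sup>2)) \<longlonglongrightarrow> 0"
    by simp
  then have "(\<lambda>m. dist (q m) ?p) \<longlonglongrightarrow> 0"
    by (rule Lim_null_comparison[OF always_eventually, rotated]) (simp add: bound)
  then show ?thesis
    by (rule tendsto_dist_iff[THEN iffD2])
qed

lemma infdist_eq_dist_closest_point:
  fixes K :: "'n::euclidean_space set"
  assumes "K \<noteq> {}"
  shows "infdist a K = dist a (closest_point (closure K) a)"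
proof -
  have "infdist a K = setdist {a} (closure K)" by (simp add: infdist_eq_setdist)
  also have "\<dots> = dist a (closest_point (closure K) a)"
    using assms by (intro setdist_closest_point) auto
  finally show ?thesis .
qed

lemma borel_measurable_closest_point_closure_range:
  fixes g :: "'i::countable \<Rightarrow> 'a \<Rightarrow> 'n::euclidean_space"
  assumes [measurable]: "\<And>i. g i \<in> borel_measurable M" "y \<in> borel_measurable M"
    and convex: "\<And>t. convex (closure (range (\<lambda>i. g i t)))"
  shows "(\<lambda>t. closest_point (closure (range (\<lambda>i. g i t))) (y t)) \<in> borel_measurable M"
proof -
  define d where "d t = (INF i. dist (y t) (g i t))" for t
  have bdd: "bdd_below (range (\<lambda>i. dist (y t) (g i t)))" for t
    by (rule bdd_belowI2[of _ 0]) simp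
  have d_eq: "d t = dist (y t) (closest_point (closure (range (\<lambda>i. g i t))) (y t))" for t
    using infdist_eq_dist_closest_point[of "range (\<lambda>i. g i t)" "y t"]
    by (simp add: d_def infdist_def image_image)
  have [measurable]: "d \<in> borel_measurable M"
    unfolding d_def by measurable
  define P where "P m n t \<longleftrightarrow> dist (y t) (g (from_nat n) t) < d t + inverse (real (Suc m))"
    for m n t
  have [measurable]: "Measurable.pred M (P m n)" for m n
    unfolding P_def by measurable
  have "\<exists>n. P m n t" for m t
  proof -
    have "\<exists>i. dist (y t) (g i t) < d t + inverse (real (Suc m))"
    proof -
      have "(INF i. dist (y t) (g i t)) < d t + inverse (real (Suc m))"
        by (simp add: d_def)
      then show ?thesis by (subst (asm) cINF_less_iff[OF _ bdd]) auto
    qed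
    then show ?thesis unfolding P_def by (metis from_nat_to_nat)
  qed
  then have P_Least: "P m (LEAST n. P m n t) t" for m t
    by (rule LeastI_ex)
  define q where "q m t = g (from_nat (LEAST n. P m n t)) t" for m t
  have [measurable]: "q m \<in> borel_measurable M" for m
    unfolding q_def
    by (rule measurable_compose_countable[where f = "\<lambda>n t. g (from_nat n) t"]) measurable
  have "(\<lambda>m. q m t) \<longlonglongrightarrow> closest_point (closure (range (\<lambda>i. g i t))) (y t)" for t
  proof (rule tendsto_closest_point[OF closed_closure convex])
    show "q m t \<in> closure (range (\<lambda>i. g i t))" for m
      unfolding q_def by (simp add: closure_subset[THEN subsetD])
    have "d t \<le> dist (y t) (q m t)" for m
      unfolding d_def q_def by (rule cINF_lower[OF bdd]) simp
    moreover have "dist (y t) (q m t) \<le> d t + inverse (real (Suc m))" for m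
      using P_Least[of m t] by (simp add: P_def q_def)
    ultimately show "(\<lambda>m. dist (y t) (q m t))
        \<longlonglongrightarrow> dist (y t) (closest_point (closure (range (\<lambda>i. g i t))) (y t))"
      unfolding d_eq[symmetric]
      by (intro real_tendsto_sandwich[OF always_eventually always_eventually tendsto_const
            LIMSEQ_inverse_real_of_nat_add]) auto
  qed
  then show ?thesis
    by (rule borel_measurable_LIMSEQ_metric[rotated]) measurable
qed

lemma abs_inner_le_bound: "norm a \<le> B \<Longrightarrow> \<bar>inner a b\<bar> \<le> B * norm b"
  using Cauchy_Schwarz_ineq2[of a b] mult_right_mono[of "norm a" B "norm b"] by simp

lemma integrable_inner_bounded:
  fixes w :: "'a \<Rightarrow> 'n::euclidean_space"
  assumes [measurable]: "w \<in> borel_measurable M" and "\<And>t. norm (w t) \<le> B" and "integrable M f"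
  shows "integrable M (\<lambda>t. inner (w t) (f t))"
proof (rule Bochner_Integration.integrable_bound)
  show "integrable M (\<lambda>t. B * norm (f t))" using assms(3) by simp
  show "(\<lambda>t. inner (w t) (f t)) \<in> borel_measurable M"
    using borel_measurable_integrable[OF assms(3)] by measurable
  show "AE t in M. norm (inner (w t) (f t)) \<le> norm (B * norm (f t))"
  proof (intro AE_I2)
    fix t
    have "\<bar>inner (w t) (f t)\<bar> \<le> B * norm (f t)"
      using abs_inner_le_bound[OF assms(2)] .
    then show "norm (inner (w t) (f t)) \<le> norm (B * norm (f t))"
      by simp
  qed
qed

lemma inner_integral_in_L1_dual:
  fixes w :: "'a \<Rightarrow> 'n::euclidean_space"
  assumes [measurable]: "w \<in> borel_measurable M" and bound: "\<And>t. norm (w t) \<le> B"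
  shows "(\<lambda>f. \<integral>t. inner (w t) (f t) \<partial>M) \<in> L1_dual M"
  unfolding L1_dual_def
proof (intro CollectI conjI allI impI exI)
  note int = integrable_inner_bounded[OF assms]
  fix f g :: "'a \<Rightarrow> 'n" assume "integrable M f" "integrable M g"
  then show "(\<integral>t. inner (w t) (f t + g t) \<partial>M)
      = (\<integral>t. inner (w t) (f t) \<partial>M) + (\<integral>t. inner (w t) (g t) \<partial>M)"
    by (simp add: inner_add_right int)
next
  fix c and f :: "'a \<Rightarrow> 'n"
  show "(\<integral>t. inner (w t) (c *\<^sub>R f t) \<partial>M) = c * (\<integral>t. inner (w t) (f t) \<partial>M)"
    by simp
next
  note int = integrable_inner_bounded[OF assms]
  fix f :: "'a \<Rightarrow> 'n" assume f: "integrable M f"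
  have "\<bar>\<integral>t. inner (w t) (f t) \<partial>M\<bar> \<le> (\<integral>t. norm (inner (w t) (f t)) \<partial>M)"
    using integral_norm_bound[of M "\<lambda>t. inner (w t) (f t)"] by simp
  also have "\<dots> \<le> (\<integral>t. B * norm (f t) \<partial>M)"
  proof (rule integral_mono)
    show "norm (inner (w t) (f t)) \<le> B * norm (f t)" for t
      using abs_inner_le_bound[OF bound] by simp
  qed (use f int[OF f] in simp_all)
  finally show "\<bar>\<integral>t. inner (w t) (f t) \<partial>M\<bar> \<le> B * (\<integral>t. norm (f t) \<partial>M)"
    by simp
qed

lemma weak_L1_conv_bounded_gap_AE_zero:
  fixes ys :: "nat \<Rightarrow> 'a \<Rightarrow> 'n::euclidean_space"
  assumes conv: "weak_L1_conv M ys y"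
    and [measurable]: "w \<in> borel_measurable M" and bound: "\<And>t. norm (w t) \<le> B"
    and G: "integrable M G" "\<And>t. 0 \<le> G t"
    and gap: "\<And>k t. inner (w t) (ys k t) + G t \<le> inner (w t) (y t)"
  shows "AE t in M. G t = 0"
proof -
  define \<phi> where "\<phi> f = (\<integral>t. inner (w t) (f t) \<partial>M)" for f :: "'a \<Rightarrow> 'n"
  note int = integrable_inner_bounded[OF assms(2,3)]
  have ys: "\<And>k. integrable M (ys k)" and y: "integrable M y"
    using conv by (auto simp: weak_L1_conv_def)
  have "\<phi> (ys k) + integral\<^sup>L M G \<le> \<phi> y" for k
  proof -
    have "\<phi> (ys k) + integral\<^sup>L M G = (\<integral>t. inner (w t) (ys k t) + G t \<partial>M)"
      unfolding \<phi>_def using int[OF ys] G(1) by simp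
    also have "\<dots> \<le> \<phi> y"
      unfolding \<phi>_def using int[OF ys] int[OF y] G(1) gap by (intro integral_mono) auto
    finally show ?thesis .
  qed
  moreover have "(\<lambda>k. \<phi> (ys k) + integral\<^sup>L M G) \<longlonglongrightarrow> \<phi> y + integral\<^sup>L M G"
    using conv inner_integral_in_L1_dual[OF assms(2,3)]
    by (intro tendsto_add tendsto_const) (auto simp: weak_L1_conv_def \<phi>_def)
  ultimately have "\<phi> y + integral\<^sup>L M G \<le> \<phi> y"
    by (intro LIMSEQ_le_const2) auto
  moreover have "0 \<le> integral\<^sup>L M G"
    using G(2) by simp
  ultimately have "integral\<^sup>L M G = 0"
    by linarith
  then show ?thesis
    using integral_nonneg_eq_0_iff_AE[OF G(1)] G(2) by simp
qed

text \<open>Rescaling by 1/(1 + |v|) makes the weight bounded; the rescaled gap is then dominated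
  by |y - ys 0|, which provides its integrability.\<close>

lemma weak_L1_conv_gap_AE_zero:
  fixes ys :: "nat \<Rightarrow> 'a \<Rightarrow> 'n::euclidean_space"
  assumes conv: "weak_L1_conv M ys y"
    and [measurable]: "v \<in> borel_measurable M" "G \<in> borel_measurable M"
    and G_nonneg: "\<And>t. 0 \<le> G t"
    and gap: "\<And>k t. inner (v t) (ys k t) + G t \<le> inner (v t) (y t)"
  shows "AE t in M. G t = 0"
proof -
  define c where "c t = inverse (1 + norm (v t))" for t
  have c_pos: "0 < c t" for t
    by (simp add: c_def add_pos_nonneg)
  have [measurable]: "ys k \<in> borel_measurable M" "y \<in> borel_measurable M" for k
    using conv by (auto simp: weak_L1_conv_def intro: borel_measurable_integrable)
  have scaled_gap: "inner (c t *\<^sub>R v t) (ys k t) + c t * G t \<le> inner (c t *\<^sub>R v t) (y t)" for k t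
    using mult_left_mono[OF gap less_imp_le[OF c_pos]] by (simp add: distrib_left)
  have norm_le_1: "norm (c t *\<^sub>R v t) \<le> 1" for t
  proof -
    have "norm (c t *\<^sub>R v t) = norm (v t) / (1 + norm (v t))"
      using c_pos[of t] by (simp add: c_def divide_inverse mult.commute)
    also have "\<dots> \<le> 1"
      using add_pos_nonneg[OF zero_less_one norm_ge_zero[of "v t"]] by (simp add: divide_le_eq_1)
    finally show ?thesis .
  qed
  have "AE t in M. c t * G t = 0"
  proof (rule weak_L1_conv_bounded_gap_AE_zero[OF conv _ norm_le_1 _ _ scaled_gap])
    show "(\<lambda>t. c t *\<^sub>R v t) \<in> borel_measurable M"
      unfolding c_def by measurable
    show "0 \<le> c t * G t" for t
      using c_pos[of t] G_nonneg[of t] by simp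
    show "integrable M (\<lambda>t. c t * G t)"
    proof (rule Bochner_Integration.integrable_bound)
      show "integrable M (\<lambda>t. y t - ys 0 t)"
        using conv by (auto simp: weak_L1_conv_def)
      show "(\<lambda>t. c t * G t) \<in> borel_measurable M"
        unfolding c_def by measurable
      show "AE t in M. norm (c t * G t) \<le> norm (y t - ys 0 t)"
      proof (intro AE_I2)
        fix t
        have "c t * G t \<le> inner (c t *\<^sub>R v t) (y t - ys 0 t)"
          using scaled_gap[of t 0] by (simp add: inner_diff_right)
        also have "\<dots> \<le> norm (y t - ys 0 t)"
          using abs_inner_le_bound[OF norm_le_1[of t], of "y t - ys 0 t"] by (simp add: abs_le_iff)
        finally show "norm (c t * G t) \<le> norm (y t - ys 0 t)"
          using c_pos[of t] G_nonneg[of t] by simp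
      qed
    qed
  qed
  then show ?thesis
  proof (rule eventually_mono)
    fix t assume "c t * G t = 0"
    then show "G t = 0"
      using c_pos[of t] by simp
  qed
qed

lemma weak_L1_conv_AE_in_closure_convex_hull:
  fixes ys :: "nat \<Rightarrow> 'a \<Rightarrow> 'n::euclidean_space"
  assumes conv: "weak_L1_conv M ys y"
  shows "AE t in M. y t \<in> closure (convex hull (range (\<lambda>k. ys k t)))"
proof -
  have [measurable]: "ys k \<in> borel_measurable M" "y \<in> borel_measurable M" for k
    using conv by (auto simp: weak_L1_conv_def intro: borel_measurable_integrable)
  define K where "K t = closure (rat_hull (\<lambda>k. ys k t))" for t
  define p where "p t = closest_point (K t) (y t)" for t
  have K: "closed (K t)" "convex (K t)" "ys k t \<in> K t" for k t
  proof -
    show "closed (K t)" "convex (K t)"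
      by (simp_all add: K_def convex_closure_rat_hull)
    have "ys k t \<in> rat_hull (\<lambda>k. ys k t)"
      using rat_hull_mem[of "\<lambda>k. ys k t" k] by simp
    then show "ys k t \<in> K t"
      unfolding K_def using closure_subset by blast
  qed
  have [measurable]: "p \<in> borel_measurable M"
    unfolding p_def K_def rat_hull_def
  proof (rule borel_measurable_closest_point_closure_range)
    show "(\<lambda>t. mix_eval e (\<lambda>k. ys k t)) \<in> borel_measurable M" for e
      by measurable
    show "convex (closure (range (\<lambda>e. mix_eval e (\<lambda>k. ys k t))))" for t
      using convex_closure_rat_hull unfolding rat_hull_def .
  qed measurable
  have "AE t in M. (dist (y t) (p t))\<^sup>2 = 0"
  proof (rule weak_L1_conv_gap_AE_zero[OF conv])
    show "(\<lambda>t. y t - p t) \<in> borel_measurable M"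
      by measurable
    show "(\<lambda>t. (dist (y t) (p t))\<^sup>2) \<in> borel_measurable M"
      by measurable
    show "inner (y t - p t) (ys k t) + (dist (y t) (p t))\<^sup>2 \<le> inner (y t - p t) (y t)" for k t
      unfolding p_def by (rule inner_closest_point_gap[OF K])
  qed simp
  then show ?thesis
  proof (rule eventually_mono)
    fix t assume "(dist (y t) (p t))\<^sup>2 = 0"
    then have "y t = p t"
      by simp
    moreover have "p t \<in> K t"
      unfolding p_def using K(1) K(3)[of 0 t] by (intro closest_point_in_set) auto
    ultimately show "y t \<in> closure (convex hull (range (\<lambda>k. ys k t)))"
      unfolding K_def using closure_mono[OF rat_hull_subset_convex_hull[of "\<lambda>k. ys k t"]] by auto
  qed
qed

lemma weak_L1_conv_shift:
  "weak_L1_conv M ys y \<Longrightarrow> weak_L1_conv M (\<lambda>k. ys (k + N)) y"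
  unfolding weak_L1_conv_def by (auto intro: LIMSEQ_ignore_initial_segment)

lemma outer_limitI_closure:
  fixes A :: "nat \<Rightarrow> 'a::metric_space set"
  assumes "\<And>j. y \<in> closure (A j)"
  shows "y \<in> outer_limit A"
proof -
  have "\<forall>j. \<exists>z. z \<in> A j \<and> dist z y < inverse (real (Suc j))"
  proof
    fix j
    have "0 < inverse (real (Suc j))" by simp
    then have "\<exists>z\<in>A j. dist z y < inverse (real (Suc j))"
      using assms[of j] unfolding closure_approachable by simp
    then show "\<exists>z. z \<in> A j \<and> dist z y < inverse (real (Suc j))"
      by (simp add: Bex_def)
  qed
  then obtain z where z: "\<And>j. z j \<in> A j" "\<And>j. dist (z j) y < inverse (real (Suc j))"
    by metis
  have "\<forall>j. norm (dist (z j) y) \<le> inverse (real (Suc j))"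
    using z(2) by (simp add: less_imp_le)
  then have "(\<lambda>j. dist (z j) y) \<longlonglongrightarrow> 0"
    by (rule Lim_null_comparison[OF always_eventually LIMSEQ_inverse_real_of_nat])
  then have "z \<longlonglongrightarrow> y" by (rule tendsto_dist_iff[THEN iffD2])
  then show ?thesis
    unfolding outer_limit_def using z(1) strict_mono_id by (intro CollectI exI[of _ id]) auto
qed

lemma conv_inf_memI:
  assumes "(\<lambda>k. xs k) \<longlonglongrightarrow> x" and "\<And>k. ys k \<in> F (xs k)"
    and "\<And>N. y \<in> closure (convex hull (range (\<lambda>k. ys (k + N))))"
  shows "y \<in> conv_inf F x"
  unfolding conv_inf_def
proof (rule outer_limitI_closure)
  fix j
  let ?B = "ball x (1 / real (Suc j))"
  have "0 < 1 / real (Suc j)" by simp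
  then obtain N where "\<forall>k\<ge>N. dist (xs k) x < 1 / real (Suc j)"
    using assms(1) unfolding lim_sequentially by blast
  then have N: "xs k \<in> ?B" if "k \<ge> N" for k
    using that by (simp add: dist_commute)
  have "range (\<lambda>k. ys (k + N)) \<subseteq> \<Union> (F ` ?B)"
  proof (intro image_subsetI)
    fix k
    show "ys (k + N) \<in> \<Union> (F ` ?B)"
      using N[of "k + N"] assms(2)[of "k + N"] by (rule UN_I) simp
  qed
  then have "closure (convex hull (range (\<lambda>k. ys (k + N))))
      \<subseteq> closure (convex hull \<Union> (F ` ?B))"
    by (intro closure_mono hull_mono)
  then show "y \<in> closure (convex hull \<Union> (F ` ?B))"
    using assms(3) by blast
qed

theorem theorem4p9:
  fixes M :: "'a measure"
    and F :: "'m::euclidean_space \<Rightarrow> 'n::euclidean_space set"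
    and xs :: "nat \<Rightarrow> 'a \<Rightarrow> 'm" and x :: "'a \<Rightarrow> 'm"
    and ys :: "nat \<Rightarrow> 'a \<Rightarrow> 'n" and y :: "'a \<Rightarrow> 'n"
  assumes "\<And>k. xs k \<in> borel_measurable M"
    and "\<And>k. ys k \<in> borel_measurable M"
    and "AE t in M. (\<lambda>k. xs k t) \<longlonglongrightarrow> x t"
    and "weak_L1_conv M ys y"
    and "\<And>k. AE t in M. ys k t \<in> F (xs k t)"
  shows "AE t in M. y t \<in> conv_inf F (x t)"
proof -
  have "AE t in M. \<forall>N. y t \<in> closure (convex hull (range (\<lambda>k. ys (k + N) t)))"
    by (subst AE_all_countable)
       (intro allI weak_L1_conv_AE_in_closure_convex_hull weak_L1_conv_shift assms(4))
  moreover have "AE t in M. \<forall>k. ys k t \<in> F (xs k t)"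
    by (subst AE_all_countable) (intro allI assms(5))
  ultimately show ?thesis
    using assms(3) by eventually_elim (intro conv_inf_memI, auto)
qed

end
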